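(* Let $G$ be a graph and $S\subseteq V(G)$. Let $H$ be a graph with $\partial(S)\subseteq V(H)$ and $V(H)\cap(V(G)\setminus S)=\emptyset$ such that $B_{G[S]}(\partial(S))=B_H(\partial(S))$, and let $G'$ be the graph obtained from $G$ by replacing $G[S]$ with $H$ (that is, $V(G')=(V(G)\setminus S)\cup V(H)$ and $E(G')$ consists of the edges of $G$ not having both endpoints in $S$ together with $E(H)$). Then for any proper $2$-coloring $K$ of $G$, the restriction $K|_{(V(G)\setminus S)\cup\partial(S)}$ can be extended to a proper $2$-coloring of $G'$, and for any proper $2$-coloring $K'$ of $G'$, the restriction $K'|_{(V(G)\setminus S)\cup\partial(S)}$ can be extended to a proper $2$-coloring of $G$.
   Context: $\partial(S)$ is the set of vertices of $S$ having at least one neighbor in $V(G)\setminus S$. For a graph $X$ and $T\subseteq V(X)$, $B_X(T)$ is the set of subsets $T'\subseteq T$ such that there is a bipartition of $X$ (proper $2$-coloring) with all of $T'$ in one part and all of $T\setminus T'$ in the other; $B_X(T)=\emptyset$ if $X$ is not bipartite. *)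

theory Defs
  imports Main
begin

definition graph :: "'a set \<Rightarrow> 'a set set \<Rightarrow> bool" where
  "graph V E \<longleftrightarrow> finite V \<and> (\<forall>e\<in>E. \<exists>u v. e = {u, v} \<and> u \<noteq> v \<and> u \<in> V \<and> v \<in> V)"

definition boundary :: "'a set \<Rightarrow> 'a set set \<Rightarrow> 'a set \<Rightarrow> 'a set" where
  "boundary V E S = {v \<in> S. \<exists>u \<in> V - S. {u, v} \<in> E}"

definition induced_edges :: "'a set set \<Rightarrow> 'a set \<Rightarrow> 'a set set" where
  "induced_edges E S = {e \<in> E. e \<subseteq> S}"

definition proper_2col :: "'a set \<Rightarrow> 'a set set \<Rightarrow> ('a \<Rightarrow> bool) \<Rightarrow> bool" where
  "proper_2col V E K \<longleftrightarrow> (\<forall>u v. {u, v} \<in> E \<longrightarrow> u \<noteq> v \<longrightarrow> K u \<noteq> K v)"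

definition bipartition :: "'a set \<Rightarrow> 'a set set \<Rightarrow> 'a set \<Rightarrow> 'a set \<Rightarrow> bool" where
  "bipartition V E A B \<longleftrightarrow> A \<union> B = V \<and> A \<inter> B = {} \<and>
     (\<forall>e\<in>E. \<not> e \<subseteq> A \<and> \<not> e \<subseteq> B)"

definition Bset :: "'a set \<Rightarrow> 'a set set \<Rightarrow> 'a set \<Rightarrow> 'a set set" where
  "Bset V E T = {T'. T' \<subseteq> T \<and> (\<exists>A B. bipartition V E A B \<and> T' \<subseteq> A \<and> T - T' \<subseteq> B)}"

end

theory Submission
  imports Defs
begin

text \<open>A proper 2-colouring of G induces a bipartition of G[S] whose trace on \<partial>S lies in
  B_G[S](\<partial>S) = B_H(\<partial>S). Hence H has a bipartition with the same trace, and recolouring H by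
  it keeps every edge of G leaving S proper: such an edge meets S only in \<partial>S, where no colour
  changes. The argument is symmetric in G[S] and H.\<close>

lemma graph_edgeD: "graph V E \<Longrightarrow> {u, v} \<in> E \<Longrightarrow> u \<in> V \<and> v \<in> V \<and> u \<noteq> v"
  unfolding graph_def by (auto simp: doubleton_eq_iff)

lemma graph_edgeE:
  assumes "graph V E" "e \<in> E"
  obtains u v where "e = {u, v}" "u \<noteq> v" "u \<in> V" "v \<in> V"
  using assms unfolding graph_def by blast

lemma graph_induced:
  assumes "graph V E" "S \<subseteq> V"
  shows "graph S (induced_edges E S)"
  unfolding graph_def induced_edges_def
proof (intro conjI ballI)
  show "finite S"
    using assms finite_subset unfolding graph_def by blast
next
  fix e assume "e \<in> {e \<in> E. e \<subseteq> S}"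
  then obtain u v where "e = {u, v}" "u \<noteq> v" "e \<subseteq> S"
    using graph_edgeE[OF assms(1)] by (metis (no_types, lifting) mem_Collect_eq)
  then show "\<exists>u v. e = {u, v} \<and> u \<noteq> v \<and> u \<in> S \<and> v \<in> S" by blast
qed

lemma edge_leaving_imp_boundary:
  assumes "graph V E" "{u, v} \<in> E" "\<not> {u, v} \<subseteq> S" "u \<in> S"
  shows "u \<in> boundary V E S"
  using assms graph_edgeD[OF assms(1,2)] unfolding boundary_def by (auto simp: insert_commute)

lemma proper_2col_Un:
  "proper_2col V (E \<union> F) K \<longleftrightarrow> proper_2col V E K \<and> proper_2col V F K"
  unfolding proper_2col_def by blast

lemma proper_2col_bipartition:
  assumes "graph V E" "proper_2col V E K"
  shows "bipartition V E {v \<in> V. K v} {v \<in> V. \<not> K v}"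
  unfolding bipartition_def
proof (intro conjI ballI)
  fix e assume "e \<in> E"
  then obtain u v where "e = {u, v}" "u \<noteq> v"
    using graph_edgeE[OF assms(1)] by metis
  moreover from this have "K u \<noteq> K v"
    using assms(2) \<open>e \<in> E\<close> unfolding proper_2col_def by simp
  ultimately show "\<not> e \<subseteq> {v \<in> V. K v}" "\<not> e \<subseteq> {v \<in> V. \<not> K v}" by auto
qed auto

lemma bipartition_proper_2col:
  assumes "graph V E" "bipartition V E A B"
  shows "proper_2col V E (\<lambda>v. v \<in> A)"
  unfolding proper_2col_def
proof (intro allI impI)
  fix u v assume e: "{u, v} \<in> E"
  then have "u \<in> A \<union> B" "v \<in> A \<union> B" "\<not> {u, v} \<subseteq> A" "\<not> {u, v} \<subseteq> B"
    using assms graph_edgeD[OF assms(1) e] unfolding bipartition_def by auto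
  then show "(u \<in> A) \<noteq> (v \<in> A)" by auto
qed

lemma proper_2col_in_Bset:
  assumes "graph V E" "T \<subseteq> V" "proper_2col V E K"
  shows "{v \<in> T. K v} \<in> Bset V E T"
  unfolding Bset_def using assms(2) proper_2col_bipartition[OF assms(1,3)] by blast

text \<open>F stands for the edges of G leaving S; (W, EW) and (W', EW') for the interchangeable
  pieces G[S] and H.\<close>

lemma proper_2col_replace_part:
  assumes "graph W EW" "graph W' EW'" "T \<subseteq> W"
    and "Bset W EW T \<subseteq> Bset W' EW' T"
    and K: "proper_2col V (F \<union> EW) K"
    and F_meets_W': "\<And>u v. {u, v} \<in> F \<Longrightarrow> u \<in> W' \<Longrightarrow> u \<in> T"
  shows "\<exists>K'. proper_2col V' (F \<union> EW') K' \<and> (\<forall>v. v \<notin> W' \<or> v \<in> T \<longrightarrow> K' v = K v)"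
proof -
  have "proper_2col W EW K"
    using K by (simp add: proper_2col_Un proper_2col_def)
  then have "{v \<in> T. K v} \<in> Bset W' EW' T"
    using assms(4) proper_2col_in_Bset[OF assms(1,3)] by blast
  then obtain A B where AB: "bipartition W' EW' A B"
      "{v \<in> T. K v} \<subseteq> A" "T - {v \<in> T. K v} \<subseteq> B"
    unfolding Bset_def by blast
  define K' where "K' v = (if v \<in> W' then v \<in> A else K v)" for v
  have agree: "K' v = K v" if "v \<notin> W' \<or> v \<in> T" for v
  proof (cases "v \<in> W'")
    case True
    then have "v \<in> T" using that by blast
    moreover have "A \<inter> B = {}" using AB(1) unfolding bipartition_def by blast
    ultimately have "(v \<in> A) = K v" using AB(2,3) by blast
    then show ?thesis using True unfolding K'_def by simp
  qed (simp add: K'_def)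
  have "proper_2col V' EW' K'"
    unfolding proper_2col_def
  proof (intro allI impI)
    fix u v assume "{u, v} \<in> EW'" "u \<noteq> v"
    moreover from this have "u \<in> W'" "v \<in> W'"
      using graph_edgeD[OF assms(2)] by blast+
    ultimately show "K' u \<noteq> K' v"
      using bipartition_proper_2col[OF assms(2) AB(1)] unfolding proper_2col_def K'_def by simp
  qed
  moreover have "proper_2col V' F K'"
    unfolding proper_2col_def
  proof (intro allI impI)
    fix u v assume uv: "{u, v} \<in> F" "u \<noteq> v"
    then have "{v, u} \<in> F" by (simp add: insert_commute)
    then have "K' u = K u" "K' v = K v"
      using agree F_meets_W' uv(1) by blast+
    moreover have "K u \<noteq> K v"
      using K uv unfolding proper_2col_def by blast
    ultimately show "K' u \<noteq> K' v" by simp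
  qed
  ultimately show ?thesis
    using agree by (auto simp: proper_2col_Un)
qed

theorem lemma5p5:
  fixes V VH :: "'a set" and E EH :: "'a set set" and S :: "'a set"
  assumes "graph V E" and "S \<subseteq> V"
    and "graph VH EH"
    and "boundary V E S \<subseteq> VH"
    and "VH \<inter> (V - S) = {}"
    and "Bset S (induced_edges E S) (boundary V E S) = Bset VH EH (boundary V E S)"
  shows "(\<forall>K. proper_2col V E K \<longrightarrow>
            (\<exists>K'. proper_2col ((V - S) \<union> VH) ({e \<in> E. \<not> e \<subseteq> S} \<union> EH) K' \<and>
                  (\<forall>v \<in> (V - S) \<union> boundary V E S. K' v = K v)))
       \<and> (\<forall>K'. proper_2col ((V - S) \<union> VH) ({e \<in> E. \<not> e \<subseteq> S} \<union> EH) K' \<longrightarrow>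
            (\<exists>K. proper_2col V E K \<and>
                  (\<forall>v \<in> (V - S) \<union> boundary V E S. K v = K' v)))"
proof -
  let ?F = "{e \<in> E. \<not> e \<subseteq> S}" and ?T = "boundary V E S"
  have E_split: "?F \<union> induced_edges E S = E"
    unfolding induced_edges_def by blast
  have graph_S: "graph S (induced_edges E S)"
    using graph_induced assms(1,2) by blast
  have T_sub: "?T \<subseteq> S"
    unfolding boundary_def by blast
  have F_meets_S: "u \<in> ?T" if "{u, v} \<in> ?F" "u \<in> S" for u v
    using edge_leaving_imp_boundary[OF assms(1)] that by blast
  have F_meets_VH: "u \<in> ?T" if "{u, v} \<in> ?F" "u \<in> VH" for u v
    using F_meets_S[OF that(1)] that graph_edgeD[OF assms(1)] assms(5) by blast
  show ?thesis
  proof (intro conjI allI impI)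
    fix K assume "proper_2col V E K"
    then have K: "proper_2col V (?F \<union> induced_edges E S) K"
      using E_split by simp
    have "\<exists>K'. proper_2col ((V - S) \<union> VH) (?F \<union> EH) K' \<and>
        (\<forall>v. v \<notin> VH \<or> v \<in> ?T \<longrightarrow> K' v = K v)"
      by (rule proper_2col_replace_part[OF graph_S assms(3) T_sub])
        (use assms(6) K F_meets_VH in auto)
    then show "\<exists>K'. proper_2col ((V - S) \<union> VH) (?F \<union> EH) K' \<and>
        (\<forall>v \<in> (V - S) \<union> ?T. K' v = K v)"
      using assms(5) by blast
  next
    fix K' assume K': "proper_2col ((V - S) \<union> VH) (?F \<union> EH) K'"
    have "\<exists>K. proper_2col V (?F \<union> induced_edges E S) K \<and>
        (\<forall>v. v \<notin> S \<or> v \<in> ?T \<longrightarrow> K v = K' v)"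
      by (rule proper_2col_replace_part[OF assms(3) graph_S assms(4)])
        (use assms(6) K' F_meets_S in auto)
    then show "\<exists>K. proper_2col V E K \<and> (\<forall>v \<in> (V - S) \<union> ?T. K v = K' v)"
      using E_split by (metis DiffE UnE)
  qed
qed

end
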